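(* For any $0<\delta\le 1/2$, $0<\epsilon\le 1$ and integer $\Delta\ge 3$, there exists a randomised algorithm that, given the number $n$ of nodes and access to a preference oracle for a bicoloured graph $\mathcal{G}$ without isolated nodes and with maximum degree at most $\Delta$, makes at most $25000\,\epsilon^{-2}(\Delta-1)^{3+4\Delta/\epsilon}\ln\delta^{-1}$ queries to the oracle and outputs, with probability at least $1-\delta$, an estimate $\hat m$ such that $\bigl|\hat m-|M|\bigr|\le\epsilon|M|$, where $M$ is a stable matching in $\mathcal{G}$.
   Context: A bicoloured graph is a simple undirected bipartite graph $\mathcal{G}=(R\cup B,E)$ with red nodes $R$ and blue nodes $B$ (every edge joins a red and a blue node); each node has a linear preference order on its neighbours. A matching is a set of edges no two sharing a node. An edge $\{u,v\}\in E\setminus M$ is unstable relative to a matching $M$ if (i) $u$ is unmatched or prefers $v$ to its partner in $M$, and (ii) $v$ is unmatched or prefers $u$ to its partner in $M$; $M$ is stable if there are no unstable edges. A preference oracle, queried with a node, returns the node's colour and its list of adjacent nodes in order of preference. The algorithm may sample nodes uniformly at random. *)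

theory Defs
  imports "HOL-Probability.Probability"
begin

text \<open>Bicoloured graphs on the node set {0..<n}. A node u is red iff red G u;
  pref G u is the list of neighbours of u, most preferred first.\<close>
record bigraph =
  red  :: "nat \<Rightarrow> bool"
  pref :: "nat \<Rightarrow> nat list"

definition edge :: "nat \<Rightarrow> bigraph \<Rightarrow> nat \<Rightarrow> nat \<Rightarrow> bool" where
  "edge n G u v \<longleftrightarrow> u < n \<and> v \<in> set (pref G u)"

definition valid_bigraph :: "nat \<Rightarrow> bigraph \<Rightarrow> bool" where
  "valid_bigraph n G \<longleftrightarrow>
     (\<forall>u<n. distinct (pref G u) \<and> set (pref G u) \<subseteq> {0..<n}) \<and>
     (\<forall>u<n. \<forall>v<n. v \<in> set (pref G u) \<longleftrightarrow> u \<in> set (pref G v)) \<and>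
     (\<forall>u<n. \<forall>v \<in> set (pref G u). red G u \<noteq> red G v)"

definition no_isolated :: "nat \<Rightarrow> bigraph \<Rightarrow> bool" where
  "no_isolated n G \<longleftrightarrow> (\<forall>u<n. pref G u \<noteq> [])"

definition max_degree_le :: "nat \<Rightarrow> bigraph \<Rightarrow> nat \<Rightarrow> bool" where
  "max_degree_le n G D \<longleftrightarrow> (\<forall>u<n. length (pref G u) \<le> D)"

definition prefers :: "bigraph \<Rightarrow> nat \<Rightarrow> nat \<Rightarrow> nat \<Rightarrow> bool" where
  "prefers G u v w \<longleftrightarrow> (\<exists>i j. i < j \<and> j < length (pref G u) \<and> pref G u ! i = v \<and> pref G u ! j = w)"

definition matching :: "nat \<Rightarrow> bigraph \<Rightarrow> nat set set \<Rightarrow> bool" where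
  "matching n G M \<longleftrightarrow>
     M \<subseteq> {{u, v} | u v. edge n G u v} \<and>
     (\<forall>e\<in>M. \<forall>e'\<in>M. e \<noteq> e' \<longrightarrow> e \<inter> e' = {})"

text \<open>Edge {u,v} not in M is unstable if each endpoint is unmatched or prefers
  the other endpoint to its partner (for an unmatched node the condition is vacuous).\<close>
definition unstable_edge :: "nat \<Rightarrow> bigraph \<Rightarrow> nat set set \<Rightarrow> nat \<Rightarrow> nat \<Rightarrow> bool" where
  "unstable_edge n G M u v \<longleftrightarrow> edge n G u v \<and> {u, v} \<notin> M \<and>
     (\<forall>w. {u, w} \<in> M \<longrightarrow> prefers G u v w) \<and>
     (\<forall>w. {v, w} \<in> M \<longrightarrow> prefers G v u w)"

definition stable_matching :: "nat \<Rightarrow> bigraph \<Rightarrow> nat set set \<Rightarrow> bool" where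
  "stable_matching n G M \<longleftrightarrow> matching n G M \<and> (\<nexists>u v. unstable_edge n G M u v)"

text \<open>Randomised query algorithms as (well-founded) decision trees:
  Flip = fair coin, Sample = uniformly random node of {0..<n},
  Query v = ask the preference-oracle about node v (answer: colour, preference list),
  Output = stop with an estimate.\<close>
datatype alg =
    Output real
  | Flip "bool \<Rightarrow> alg"
  | Sample "nat \<Rightarrow> alg"
  | Query nat "bool \<times> nat list \<Rightarrow> alg"

definition answer :: "bigraph \<Rightarrow> nat \<Rightarrow> bool \<times> nat list" where
  "answer G v = (red G v, pref G v)"

primrec run :: "nat \<Rightarrow> bigraph \<Rightarrow> alg \<Rightarrow> real pmf" where
  "run n G (Output r) = return_pmf r"
| "run n G (Flip f) = bind_pmf (bernoulli_pmf (1/2)) (\<lambda>b. run n G (f b))"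
| "run n G (Sample f) = bind_pmf (pmf_of_set {0..<n}) (\<lambda>v. run n G (f v))"
| "run n G (Query v f) = run n G (f (answer G v))"

primrec queries_le :: "nat \<Rightarrow> bigraph \<Rightarrow> alg \<Rightarrow> real \<Rightarrow> bool" where
  "queries_le n G (Output r) b = True"
| "queries_le n G (Flip f) b = (\<forall>c. queries_le n G (f c) b)"
| "queries_le n G (Sample f) b = (\<forall>v<n. queries_le n G (f v) b)"
| "queries_le n G (Query v f) b = (1 \<le> b \<and> queries_le n G (f (answer G v)) (b - 1))"

text \<open>The algorithm only queries nodes it knows: nodes it has sampled or that
  appeared in the answer of a previous query.\<close>
primrec legal :: "nat set \<Rightarrow> alg \<Rightarrow> bool" where
  "legal K (Output r) = True"
| "legal K (Flip f) = (\<forall>c. legal K (f c))"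
| "legal K (Sample f) = (\<forall>v. legal (insert v K) (f v))"
| "legal K (Query v f) = (v \<in> K \<and> (\<forall>a. legal (K \<union> set (snd a)) (f a)))"

end

theory Submission
  imports Defs
begin

text \<open>Let the red nodes run the Gale--Shapley algorithm in parallel rounds. Whether a node holds
  an accepted proposal after k rounds depends only on its radius 2k+2 neighbourhood, so it can be
  decided with O(\<Delta>^(2k+3)) queries. The number of accepted proposals never decreases, and after
  \<Delta>n+1 rounds they form a stable matching M. Charging every rejection to the blue node issuing
  it shows that after k rounds at most (\<Delta>-1)/k times the number of accepted red nodes are still
  active, so for k \<approx> 5\<Delta>/(4\<epsilon>) the accepted count is within 4\<epsilon>/5 |M| of |M|. As a stable
  matching of a graph without isolated nodes has at least n/(2(\<Delta>+1)) edges, sampling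
  O(\<Delta>^2 \<epsilon>^-2 log \<delta>^-1) nodes and Hoeffding's inequality estimate that count up to \<epsilon>/5 |M|.\<close>

lemma prefers_in_set: "prefers G b x y \<Longrightarrow> x \<in> set (pref G b) \<and> y \<in> set (pref G b)"
  by (auto simp: prefers_def)

lemma prefers_asym: "distinct (pref G b) \<Longrightarrow> prefers G b x y \<Longrightarrow> \<not> prefers G b y x"
  unfolding prefers_def by (metis nth_eq_iff_index_eq order.strict_trans not_less_iff_gr_or_eq)

lemma prefers_neq: "distinct (pref G b) \<Longrightarrow> prefers G b x y \<Longrightarrow> x \<noteq> y"
  unfolding prefers_def by (metis nth_eq_iff_index_eq order.strict_trans less_irrefl)

lemma prefers_trans:
  "distinct (pref G b) \<Longrightarrow> prefers G b x y \<Longrightarrow> prefers G b y z \<Longrightarrow> prefers G b x z"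
  unfolding prefers_def by (metis nth_eq_iff_index_eq order.strict_trans)

section \<open>Parallel Gale--Shapley with red proposers\<close>

text \<open>P r counts the rejections red node r has received so far, so r currently proposes to
  the P r-th entry of its list; all red nodes propose simultaneously in each round.\<close>

definition target :: "bigraph \<Rightarrow> (nat \<Rightarrow> nat) \<Rightarrow> nat \<Rightarrow> nat option" where
  "target G P r = (if P r < length (pref G r) then Some (pref G r ! P r) else None)"

definition accepted :: "bigraph \<Rightarrow> (nat \<Rightarrow> nat) \<Rightarrow> nat \<Rightarrow> bool" where
  "accepted G P r \<longleftrightarrow> red G r \<and> (\<exists>b. target G P r = Some b \<and>
      (\<forall>r'\<in>set (pref G b). r' \<noteq> r \<and> red G r' \<and> target G P r' = Some b \<longrightarrow> prefers G b r r'))"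

primrec rejections :: "bigraph \<Rightarrow> nat \<Rightarrow> nat \<Rightarrow> nat" where
  "rejections G 0 = (\<lambda>r. 0)"
| "rejections G (Suc t) = (\<lambda>r. rejections G t r +
      (if red G r \<and> target G (rejections G t) r \<noteq> None \<and> \<not> accepted G (rejections G t) r
       then 1 else 0))"

definition active :: "bigraph \<Rightarrow> nat \<Rightarrow> nat \<Rightarrow> bool" where
  "active G t r \<longleftrightarrow> red G r \<and> target G (rejections G t) r \<noteq> None \<and> \<not> accepted G (rejections G t) r"

lemma rejections_Suc: "rejections G (Suc t) r = rejections G t r + (if active G t r then 1 else 0)"
  by (simp add: active_def)

lemma rejections_eq_sum: "rejections G k r = (\<Sum>t<k. if active G t r then 1 else 0)"
  by (induction k) (simp_all add: rejections_Suc del: rejections.simps(2))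

lemma rejections_not_red: "\<not> red G r \<Longrightarrow> rejections G t r = 0"
  by (induction t) auto

lemma rejections_le_length: "rejections G t r \<le> length (pref G r)"
  by (induction t) (auto simp: target_def split: if_splits)

lemma rejections_mono: "t \<le> t' \<Longrightarrow> rejections G t r \<le> rejections G t' r"
  by (induction t' rule: dec_induct) (simp_all add: rejections_Suc del: rejections.simps(2))

lemma target_SomeD:
  "target G P r = Some b \<Longrightarrow> b \<in> set (pref G r) \<and> P r < length (pref G r) \<and> pref G r ! P r = b"
  by (auto simp: target_def split: if_splits)

locale deg_bigraph =
  fixes n :: nat and G :: bigraph and D :: nat
  assumes valid: "valid_bigraph n G"
    and deg: "\<And>u. u < n \<Longrightarrow> length (pref G u) \<le> D"
begin

lemma pref_distinct: "u < n \<Longrightarrow> distinct (pref G u)"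
  using valid by (auto simp: valid_bigraph_def)

lemma pref_lt: "u < n \<Longrightarrow> v \<in> set (pref G u) \<Longrightarrow> v < n"
  using valid unfolding valid_bigraph_def by (meson atLeastLessThan_iff subsetD)

lemma pref_sym: "u < n \<Longrightarrow> v \<in> set (pref G u) \<Longrightarrow> u \<in> set (pref G v)"
  using valid pref_lt unfolding valid_bigraph_def by blast

lemma pref_colour: "u < n \<Longrightarrow> v \<in> set (pref G u) \<Longrightarrow> red G u \<noteq> red G v"
  using valid unfolding valid_bigraph_def by blast

abbreviation "proposal t \<equiv> target G (rejections G t)"
abbreviation "accepted_at t \<equiv> accepted G (rejections G t)"

lemma proposal_neighbour:
  "r < n \<Longrightarrow> proposal t r = Some b \<Longrightarrow> b < n \<and> b \<in> set (pref G r) \<and> r \<in> set (pref G b)"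
  using target_SomeD pref_lt pref_sym by blast

lemma accepted_red: "accepted_at t r \<Longrightarrow> red G r"
  by (simp add: accepted_def)

lemma accepted_unique:
  assumes "r1 < n" "r2 < n" "accepted_at t r1" "accepted_at t r2"
    and "proposal t r1 = Some b" "proposal t r2 = Some b"
  shows "r1 = r2"
proof (rule ccontr)
  assume ne: "r1 \<noteq> r2"
  have b: "b < n" "r1 \<in> set (pref G b)" "r2 \<in> set (pref G b)"
    using proposal_neighbour assms by blast+
  have preferred: "prefers G b r r'"
    if "accepted_at t r" "proposal t r = Some b" "r' \<in> set (pref G b)" "r' \<noteq> r"
      "red G r'" "proposal t r' = Some b" for r r'
    using that by (auto simp: accepted_def)
  have "prefers G b r1 r2" using preferred[OF assms(3,5) b(3) ne[symmetric]] assms accepted_red by blast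
  moreover have "prefers G b r2 r1" using preferred[OF assms(4,6) b(2) ne] assms accepted_red by blast
  ultimately show False using prefers_asym pref_distinct b(1) by blast
qed

lemma accepted_proposal_exists:
  assumes "r0 < n" "red G r0" "proposal t r0 = Some b"
  shows "\<exists>p. p < n \<and> accepted_at t p \<and> proposal t p = Some b \<and> (p = r0 \<or> prefers G b p r0)"
proof -
  define xs where "xs = pref G b"
  have b: "b < n" "r0 \<in> set xs" using proposal_neighbour[OF assms(1,3)] unfolding xs_def by blast+
  define C where "C i \<longleftrightarrow> i < length xs \<and> red G (xs ! i) \<and> proposal t (xs ! i) = Some b" for i
  obtain i1 where i1: "i1 < length xs" "xs ! i1 = r0" using b(2) by (auto simp: in_set_conv_nth)
  have "C i1" using i1 assms by (simp add: C_def)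
  define i0 where "i0 = (LEAST i. C i)"
  have Ci0: "i0 < length xs" "red G (xs ! i0)" "proposal t (xs ! i0) = Some b"
    using LeastI[of C, OF \<open>C i1\<close>] by (simp_all add: C_def i0_def)
  define p where "p = xs ! i0"
  have pn: "p < n" using pref_lt[OF b(1)] Ci0(1) nth_mem unfolding p_def xs_def by blast
  have better: "prefers G b p r'"
    if r': "r' \<in> set xs" "r' \<noteq> p" "red G r'" "proposal t r' = Some b" for r'
  proof -
    obtain j where j: "j < length xs" "xs ! j = r'" using r'(1) by (auto simp: in_set_conv_nth)
    have "i0 \<le> j" unfolding i0_def using j r' by (intro Least_le) (simp add: C_def)
    moreover have "i0 \<noteq> j" using j r'(2) p_def by auto
    ultimately have "i0 < j" by simp
    then show ?thesis unfolding prefers_def xs_def[symmetric] using j Ci0(1) p_def by blast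
  qed
  have "accepted_at t p"
    unfolding accepted_def using Ci0(2,3) better by (auto simp: p_def xs_def)
  moreover have "p = r0 \<or> prefers G b p r0" using better[OF b(2) _ assms(2,3)] by blast
  ultimately show ?thesis using pn Ci0(3) p_def by blast
qed

lemma accepted_stays: "accepted_at t p \<Longrightarrow> proposal (Suc t) p = proposal t p"
  by (simp add: rejections_Suc active_def target_def)

lemma rejecting_node_holds_better:
  assumes "r < n" "red G r" "i < rejections G t r"
  shows "\<exists>p. p < n \<and> accepted_at t p \<and> proposal t p = Some (pref G r ! i)
               \<and> prefers G (pref G r ! i) p r"
  using assms(3)
proof (induction t)
  case 0 then show ?case by simp
next
  case (Suc t)
  define b where "b = pref G r ! i"
  have persists: "\<exists>p'. p' < n \<and> accepted_at (Suc t) p' \<and> proposal (Suc t) p' = Some b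
                        \<and> prefers G b p' r"
    if p: "p < n" "accepted_at t p" "proposal t p = Some b" "prefers G b p r" for p
  proof -
    have "proposal (Suc t) p = Some b" using accepted_stays p by simp
    then obtain p' where p': "p' < n" "accepted_at (Suc t) p'" "proposal (Suc t) p' = Some b"
        "p' = p \<or> prefers G b p' p"
      using accepted_proposal_exists p accepted_red by blast
    have "b < n" using proposal_neighbour p by blast
    then have "prefers G b p' r" using p'(4) p(4) prefers_trans pref_distinct by blast
    then show ?thesis using p' by blast
  qed
  show ?case
  proof (cases "i < rejections G t r")
    case True
    then show ?thesis using Suc.IH persists b_def by blast
  next
    case False
    then have act: "active G t r" and "i = rejections G t r"
      using Suc.prems rejections_Suc[of G t r] by (auto split: if_splits)
    then have "proposal t r = Some b" using b_def by (auto simp: active_def target_def split: if_splits)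
    then obtain p where p: "p < n" "accepted_at t p" "proposal t p = Some b" "p = r \<or> prefers G b p r"
      using accepted_proposal_exists assms by blast
    have "p \<noteq> r" using p act by (auto simp: active_def)
    then show ?thesis using persists p b_def by blast
  qed
qed

subsection \<open>Counting accepted and active proposers\<close>

definition "Reds = {r. r < n \<and> red G r}"
definition "Accepted t = {r. r < n \<and> accepted_at t r}"
definition "Active t = {r. r < n \<and> active G t r}"
definition "Exhausted t = {r. r < n \<and> red G r \<and> proposal t r = None}"
definition "Proposed t = {b. \<exists>r. r < n \<and> red G r \<and> proposal t r = Some b}"

lemma finite_round_sets:
  "finite Reds" "finite (Accepted t)" "finite (Active t)" "finite (Exhausted t)" "finite (Proposed t)"
proof -
  have "Reds \<subseteq> {..<n}" "Accepted t \<subseteq> {..<n}" "Active t \<subseteq> {..<n}" "Exhausted t \<subseteq> {..<n}"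
      "Proposed t \<subseteq> {..<n}"
    using proposal_neighbour by (auto simp: Reds_def Accepted_def Active_def Exhausted_def Proposed_def)
  then show "finite Reds" "finite (Accepted t)" "finite (Active t)" "finite (Exhausted t)"
      "finite (Proposed t)"
    by (auto intro: finite_subset)
qed

lemma card_Reds_eq: "card Reds = card (Accepted t) + card (Active t) + card (Exhausted t)"
proof -
  have "Reds = Accepted t \<union> Active t \<union> Exhausted t"
    unfolding Reds_def Accepted_def Active_def Exhausted_def active_def using accepted_red by auto
  moreover have "Accepted t \<inter> Active t = {}" "(Accepted t \<union> Active t) \<inter> Exhausted t = {}"
    unfolding Accepted_def Active_def Exhausted_def active_def accepted_def by auto
  ultimately show ?thesis using finite_round_sets by (simp add: card_Un_disjoint)
qed

lemma card_Accepted_eq_card_Proposed: "card (Accepted t) = card (Proposed t)"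
proof (rule bij_betw_same_card[of "\<lambda>r. the (proposal t r)"], rule bij_betw_imageI)
  show "inj_on (\<lambda>r. the (proposal t r)) (Accepted t)"
  proof (rule inj_onI)
    fix x y assume "x \<in> Accepted t" "y \<in> Accepted t" "the (proposal t x) = the (proposal t y)"
    moreover obtain b where "proposal t x = Some b" using \<open>x \<in> Accepted t\<close>
      by (auto simp: Accepted_def accepted_def)
    ultimately show "x = y" using accepted_unique by (auto simp: Accepted_def accepted_def)
  qed
  show "(\<lambda>r. the (proposal t r)) ` Accepted t = Proposed t"
  proof
    show "(\<lambda>r. the (proposal t r)) ` Accepted t \<subseteq> Proposed t"
      by (auto simp: Accepted_def Proposed_def accepted_def)
    show "Proposed t \<subseteq> (\<lambda>r. the (proposal t r)) ` Accepted t"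
    proof
      fix b assume "b \<in> Proposed t"
      then obtain r where "r < n" "red G r" "proposal t r = Some b" by (auto simp: Proposed_def)
      then obtain p where "p < n" "accepted_at t p" "proposal t p = Some b"
        using accepted_proposal_exists by blast
      then show "b \<in> (\<lambda>r. the (proposal t r)) ` Accepted t" by (force simp: Accepted_def)
    qed
  qed
qed

lemma Proposed_mono: "t \<le> t' \<Longrightarrow> Proposed t \<subseteq> Proposed t'"
proof (induction t' rule: dec_induct)
  case (step t')
  have "b \<in> Proposed (Suc t')" if b: "b \<in> Proposed t'" for b
  proof -
    obtain r where "r < n" "red G r" "proposal t' r = Some b" using b by (auto simp: Proposed_def)
    then obtain p where "p < n" "accepted_at t' p" "proposal t' p = Some b"
      using accepted_proposal_exists by blast
    then show ?thesis using accepted_stays accepted_red by (auto simp: Proposed_def)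
  qed
  then show ?case using step.IH by blast
qed simp

lemma Exhausted_mono: "t \<le> t' \<Longrightarrow> Exhausted t \<subseteq> Exhausted t'"
proof
  fix r assume "t \<le> t'" "r \<in> Exhausted t"
  then have "length (pref G r) \<le> rejections G t' r"
    using rejections_mono[of t t' G r] by (auto simp: Exhausted_def target_def split: if_splits)
  then show "r \<in> Exhausted t'" using \<open>r \<in> Exhausted t\<close> by (simp add: Exhausted_def target_def)
qed

lemma card_Accepted_mono: "t \<le> t' \<Longrightarrow> card (Accepted t) \<le> card (Accepted t')"
  unfolding card_Accepted_eq_card_Proposed by (intro card_mono finite_round_sets Proposed_mono)

lemma card_Active_antimono: "t \<le> t' \<Longrightarrow> card (Active t') \<le> card (Active t)"
  using card_Accepted_mono[of t t'] card_mono[OF finite_round_sets(4) Exhausted_mono, of t t']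
    card_Reds_eq[of t] card_Reds_eq[of t'] by linarith

lemma sum_card_Active: "(\<Sum>t<k. card (Active t)) = (\<Sum>r<n. rejections G k r)"
proof -
  have "(\<Sum>t<k. card (Active t)) = (\<Sum>t<k. \<Sum>r<n. if active G t r then 1 else 0)"
    by (simp add: Active_def sum.If_cases Int_def)
  also have "\<dots> = (\<Sum>r<n. rejections G k r)"
    by (subst sum.swap) (simp add: rejections_eq_sum)
  finally show ?thesis .
qed

text \<open>Each rejection of r by b is charged to the pair (b, r), where b holds some other
  proposal; so b is charged at most D - 1 times.\<close>

lemma sum_rejections_le: "(\<Sum>r<n. rejections G t r) \<le> (D - 1) * card (Accepted t)"
proof -
  define Rej where "Rej = Sigma {..<n} (\<lambda>r. {..<rejections G t r})"
  define Fiber where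
    "Fiber b = {r \<in> set (pref G b). \<not> (accepted_at t r \<and> proposal t r = Some b)}" for b
  have fiber_le: "card (Fiber b) \<le> D - 1" if b: "b \<in> Proposed t" for b
  proof -
    obtain r where "r < n" "red G r" "proposal t r = Some b" using b by (auto simp: Proposed_def)
    then obtain p where p: "p < n" "accepted_at t p" "proposal t p = Some b"
      using accepted_proposal_exists by blast
    have b: "b < n" "p \<in> set (pref G b)" using proposal_neighbour p by blast+
    have "card (Fiber b) \<le> card (set (pref G b) - {p})"
      using p by (intro card_mono) (auto simp: Fiber_def)
    also have "\<dots> = length (pref G b) - 1"
      using b distinct_card[OF pref_distinct[OF b(1)]] by simp
    finally show ?thesis using deg[OF b(1)] by linarith
  qed
  have into: "(pref G r ! i, r) \<in> Sigma (Proposed t) Fiber" if "(r, i) \<in> Rej" for r i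
  proof -
    have ri: "r < n" "red G r" "i < rejections G t r"
      using that rejections_not_red[of G r t] by (auto simp: Rej_def)
    obtain p where p: "p < n" "accepted_at t p" "proposal t p = Some (pref G r ! i)"
        "prefers G (pref G r ! i) p r"
      using rejecting_node_holds_better[OF ri] by blast
    have "p \<noteq> r" using prefers_neq[OF pref_distinct] p proposal_neighbour by blast
    then show ?thesis
      using p accepted_red accepted_unique ri(1) prefers_in_set
      unfolding Proposed_def Fiber_def by fastforce
  qed
  have index_unique: "i = j"
    if "r < n" "i < rejections G t r" "j < rejections G t r" "pref G r ! i = pref G r ! j" for r i j
    using that nth_eq_iff_index_eq[OF pref_distinct] rejections_le_length[of G t r]
    by (meson order_less_le_trans)
  have "inj_on (\<lambda>(r, i). (pref G r ! i, r)) Rej"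
    by (auto simp: inj_on_def Rej_def intro: index_unique)
  moreover have "finite (Sigma (Proposed t) Fiber)"
    using finite_round_sets(5) by (auto simp: Fiber_def)
  ultimately have "card Rej \<le> card (Sigma (Proposed t) Fiber)"
    using into by (intro card_inj_on_le) auto
  then have "(\<Sum>r<n. rejections G t r) \<le> card (Sigma (Proposed t) Fiber)"
    by (simp add: Rej_def card_SigmaI)
  also have "\<dots> = (\<Sum>b\<in>Proposed t. card (Fiber b))"
    using finite_round_sets(5) by (intro card_SigmaI) (auto simp: Fiber_def)
  also have "\<dots> \<le> (\<Sum>b\<in>Proposed t. D - 1)" using fiber_le by (rule sum_mono)
  finally show ?thesis by (simp add: card_Accepted_eq_card_Proposed mult.commute)
qed

lemma card_Active_le: "k * card (Active k) \<le> (D - 1) * card (Accepted k)"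
proof -
  have "(\<Sum>t<k. card (Active k)) \<le> (\<Sum>t<k. card (Active t))"
    by (intro sum_mono card_Active_antimono) simp
  also have "\<dots> \<le> (D - 1) * card (Accepted k)"
    unfolding sum_card_Active by (rule sum_rejections_le)
  finally show ?thesis by simp
qed

lemma Active_empty: "D * n + 1 \<le> t \<Longrightarrow> Active t = {}"
proof -
  assume t: "D * n + 1 \<le> t"
  have "(\<Sum>i<t. card (Active t)) \<le> (\<Sum>i<t. card (Active i))"
    by (intro sum_mono card_Active_antimono) simp
  also have "\<dots> \<le> (\<Sum>r<n. D)"
    unfolding sum_card_Active by (intro sum_mono) (metis rejections_le_length deg le_trans lessThan_iff)
  finally have "t * card (Active t) \<le> D * n" by (simp add: mult.commute)
  then have "card (Active t) = 0" using t by (cases "card (Active t)") auto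
  then show ?thesis using finite_round_sets(3) by simp
qed

lemma card_Accepted_final_le:
  "k \<le> T \<Longrightarrow> D * n + 1 \<le> T \<Longrightarrow> card (Accepted T) \<le> card (Accepted k) + card (Active k)"
  using card_mono[OF finite_round_sets(4) Exhausted_mono, of k T] card_Reds_eq[of k] card_Reds_eq[of T]
    Active_empty[of T] by simp

subsection \<open>The final proposal matching is stable\<close>

definition "gs_matching t = (\<lambda>r. {r, the (proposal t r)}) ` Accepted t"

lemma Accepted_proposal:
  assumes "r \<in> Accepted t"
  obtains b where "proposal t r = Some b" "b < n" "b \<in> set (pref G r)" "r \<in> set (pref G b)"
    "red G r" "\<not> red G b" "r < n"
proof -
  obtain b where b: "proposal t r = Some b" using assms by (auto simp: Accepted_def accepted_def)
  have "r < n" "red G r" using assms accepted_red by (auto simp: Accepted_def)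
  then show thesis using that b proposal_neighbour pref_colour by blast
qed

lemma card_gs_matching: "card (gs_matching t) = card (Accepted t)"
  unfolding gs_matching_def
proof (rule card_image, rule inj_onI)
  fix x y assume xy: "x \<in> Accepted t" "y \<in> Accepted t" "{x, the (proposal t x)} = {y, the (proposal t y)}"
  obtain bx where "proposal t x = Some bx" "red G x" "\<not> red G bx" using Accepted_proposal[OF xy(1)] .
  moreover obtain "by" where "proposal t y = Some by" "red G y" "\<not> red G by"
    using Accepted_proposal[OF xy(2)] .
  ultimately show "x = y" using xy(3) by (auto simp: doubleton_eq_iff)
qed

lemma matching_gs_matching: "matching n G (gs_matching t)"
  unfolding matching_def
proof
  show "gs_matching t \<subseteq> {{u, v} |u v. edge n G u v}"
  proof
    fix e assume "e \<in> gs_matching t"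
    then obtain r b where "e = {r, b}" "r < n" "b \<in> set (pref G r)"
      by (auto simp: gs_matching_def elim!: Accepted_proposal)
    then show "e \<in> {{u, v} |u v. edge n G u v}" by (auto simp: edge_def)
  qed
  show "\<forall>e\<in>gs_matching t. \<forall>e'\<in>gs_matching t. e \<noteq> e' \<longrightarrow> e \<inter> e' = {}"
  proof (intro ballI impI)
    fix e e' assume e: "e \<in> gs_matching t" "e' \<in> gs_matching t" "e \<noteq> e'"
    obtain r where r: "r \<in> Accepted t" "e = {r, the (proposal t r)}" using e(1) by (auto simp: gs_matching_def)
    obtain r' where r': "r' \<in> Accepted t" "e' = {r', the (proposal t r')}"
      using e(2) by (auto simp: gs_matching_def)
    obtain b where b: "proposal t r = Some b" "red G r" "\<not> red G b" "r < n"
      using Accepted_proposal[OF r(1)] by metis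
    obtain b' where b': "proposal t r' = Some b'" "red G r'" "\<not> red G b'" "r' < n"
      using Accepted_proposal[OF r'(1)] by metis
    have "r \<noteq> r'" using e(3) r r' by auto
    then have "b \<noteq> b'" using accepted_unique r r' b b' by (auto simp: Accepted_def)
    then show "e \<inter> e' = {}" using r r' b b' \<open>r \<noteq> r'\<close> by auto
  qed
qed

lemma unstable_edge_sym: "unstable_edge n G M u v \<Longrightarrow> unstable_edge n G M v u"
  using pref_lt pref_sym by (auto simp: unstable_edge_def edge_def insert_commute)

text \<open>If red u prefers v to its final partner (or has none), then v rejected u earlier and by
  the Gale--Shapley invariant holds a proposal it prefers to u.\<close>

lemma no_unstable_red_edge:
  assumes T: "D * n + 1 \<le> T" and un: "unstable_edge n G (gs_matching T) u v" and "red G u"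
  shows False
proof -
  have e: "u < n" "v \<in> set (pref G u)" using un by (auto simp: unstable_edge_def edge_def)
  obtain j where j: "j < length (pref G u)" "pref G u ! j = v" using e(2) by (metis in_set_conv_nth)
  have "j < rejections G T u"
  proof (cases "u \<in> Accepted T")
    case True
    then obtain w where w: "proposal T u = Some w" by (auto elim: Accepted_proposal)
    then have "{u, w} \<in> gs_matching T" using True by (force simp: gs_matching_def)
    then obtain i j' where ij: "i < j'" "j' < length (pref G u)" "pref G u ! i = v" "pref G u ! j' = w"
      using un by (auto simp: unstable_edge_def prefers_def)
    have "i = j" using ij j pref_distinct[OF e(1)] nth_eq_iff_index_eq by (metis order.strict_trans)
    moreover have "j' = rejections G T u"
      using w ij pref_distinct[OF e(1)] nth_eq_iff_index_eq target_SomeD by metis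
    ultimately show ?thesis using ij by simp
  next
    case False
    then have "proposal T u = None"
      using Active_empty[OF T] e(1) \<open>red G u\<close> by (auto simp: Accepted_def Active_def active_def)
    then show ?thesis using j by (auto simp: target_def split: if_splits)
  qed
  then obtain p where p: "p < n" "accepted_at T p" "proposal T p = Some v" "prefers G v p u"
    using rejecting_node_holds_better[OF e(1) \<open>red G u\<close>] j by auto
  have "{v, p} \<in> gs_matching T" using p by (force simp: gs_matching_def Accepted_def insert_commute)
  then have "prefers G v u p" using un by (auto simp: unstable_edge_def)
  then show False using prefers_asym[OF pref_distinct[OF pref_lt[OF e]] p(4)] by blast
qed

lemma stable_gs_matching:
  assumes "D * n + 1 \<le> T"
  shows "stable_matching n G (gs_matching T)"
proof -
  have False if un: "unstable_edge n G (gs_matching T) u v" for u v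
  proof (cases "red G u")
    case True
    then show False by (rule no_unstable_red_edge[OF assms un])
  next
    case False
    then have "red G v" using un pref_colour by (auto simp: unstable_edge_def edge_def)
    then show False by (rule no_unstable_red_edge[OF assms unstable_edge_sym[OF un]])
  qed
  then show ?thesis using matching_gs_matching by (auto simp: stable_matching_def)
qed

subsection \<open>Stable matchings are large\<close>

lemma card_Union_matching_le:
  assumes "matching n G M"
  shows "finite M" "\<Union>M \<subseteq> {..<n}" "card (\<Union>M) \<le> 2 * card M"
proof -
  have M: "e \<subseteq> {..<n} \<and> card e \<le> 2" if e: "e \<in> M" for e
  proof -
    obtain u v where "e = {u, v}" "edge n G u v" using assms e by (auto simp: matching_def)
    then show ?thesis using pref_lt by (auto simp: edge_def card_insert_if)
  qed
  then show "\<Union>M \<subseteq> {..<n}" by blast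
  then show "finite M" by (meson finite_UnionD finite_lessThan finite_subset)
  have "card (\<Union>M) \<le> (\<Sum>e\<in>M. card e)" by (rule card_Union_le_sum_card)
  also have "\<dots> \<le> (\<Sum>e\<in>M. 2)" using M by (intro sum_mono) blast
  finally show "card (\<Union>M) \<le> 2 * card M" by simp
qed

text \<open>A node whose favourite neighbour is unmatched would form an unstable edge with it, so
  every node is matched or adjacent to a matched node.\<close>

lemma stable_matching_dominating:
  assumes "stable_matching n G M" "no_isolated n G" "x < n"
  shows "x \<in> (\<Union>y\<in>\<Union>M. insert y (set (pref G y)))"
proof (rule ccontr)
  assume none: "x \<notin> (\<Union>y\<in>\<Union>M. insert y (set (pref G y)))"
  define y where "y = hd (pref G x)"
  have y: "y \<in> set (pref G x)" using assms(2,3) y_def by (simp add: no_isolated_def)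
  have unmatched: "\<And>w. {x, w} \<notin> M" "\<And>w. {y, w} \<notin> M"
    using none pref_sym[OF assms(3) y] by blast+
  have "unstable_edge n G M x y"
    using assms(3) y unmatched by (simp add: unstable_edge_def edge_def)
  then show False using assms(1) by (auto simp: stable_matching_def)
qed

lemma card_stable_matching_ge:
  assumes "stable_matching n G M" "no_isolated n G"
  shows "n \<le> 2 * (D + 1) * card M"
proof -
  have M: "finite M" "\<Union>M \<subseteq> {..<n}" "card (\<Union>M) \<le> 2 * card M"
    using card_Union_matching_le assms(1) by (auto simp: stable_matching_def)
  have fin: "finite (\<Union>M)" using M(2) finite_subset by blast
  have "{..<n} \<subseteq> (\<Union>y\<in>\<Union>M. insert y (set (pref G y)))"
    using stable_matching_dominating[OF assms] by blast
  then have "card {..<n} \<le> card (\<Union>y\<in>\<Union>M. insert y (set (pref G y)))"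
    using fin by (intro card_mono finite_UN_I) auto
  also have "\<dots> \<le> (\<Sum>y\<in>\<Union>M. card (insert y (set (pref G y))))" by (rule card_UN_le[OF fin])
  also have "\<dots> \<le> (\<Sum>y\<in>\<Union>M. D + 1)"
  proof (rule sum_mono)
    fix y assume "y \<in> \<Union>M"
    then have "length (pref G y) \<le> D" using M(2) deg by auto
    then show "card (insert y (set (pref G y))) \<le> D + 1"
      using card_length[of "pref G y"] by (simp add: card_insert_if)
  qed
  also have "\<dots> = (D + 1) * card (\<Union>M)" by simp
  also have "\<dots> \<le> (D + 1) * (2 * card M)" using M(3) by (rule mult_le_mono2)
  finally show ?thesis by (simp add: mult.commute mult.left_commute)
qed

end

section \<open>Locality\<close>

primrec neighbourhood :: "bigraph \<Rightarrow> nat \<Rightarrow> nat \<Rightarrow> nat set" where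
  "neighbourhood G r 0 = {r}"
| "neighbourhood G r (Suc d) = insert r (\<Union>x\<in>set (pref G r). neighbourhood G x d)"

lemma self_in_neighbourhood: "r \<in> neighbourhood G r d"
  by (cases d) auto

lemma neighbourhood_Suc_subset: "neighbourhood G r d \<subseteq> neighbourhood G r (Suc d)"
proof (induction d arbitrary: r)
  case (Suc d)
  then show ?case by (simp only: neighbourhood.simps) blast
qed auto

lemma neighbourhood_mono: "d \<le> d' \<Longrightarrow> neighbourhood G r d \<subseteq> neighbourhood G r d'"
  using lift_Suc_mono_le[of "neighbourhood G r", OF neighbourhood_Suc_subset] by blast

lemma neighbourhood_pref_subset:
  "x \<in> set (pref G r) \<Longrightarrow> neighbourhood G x d \<subseteq> neighbourhood G r (Suc d)"
  by auto

definition agree_on :: "bigraph \<Rightarrow> bigraph \<Rightarrow> nat set \<Rightarrow> bool" where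
  "agree_on G G' S \<longleftrightarrow> (\<forall>x\<in>S. red G x = red G' x \<and> pref G x = pref G' x)"

lemma agree_on_subset: "agree_on G G' S \<Longrightarrow> T \<subseteq> S \<Longrightarrow> agree_on G G' T"
  by (auto simp: agree_on_def)

lemma accepted_cong:
  assumes "red G r = red G' r" "target G P r = target G' P' r"
    and "\<And>b. target G P r = Some b \<Longrightarrow> pref G b = pref G' b \<and>
            (\<forall>r'\<in>set (pref G b). red G r' = red G' r' \<and> target G P r' = target G' P' r')"
  shows "accepted G P r = accepted G' P' r"
proof (cases "target G P r")
  case None
  then show ?thesis using assms(2) by (simp add: accepted_def)
next
  case (Some b)
  then have b: "pref G b = pref G' b"
    "\<forall>r'\<in>set (pref G b). red G r' = red G' r' \<and> target G P r' = target G' P' r'"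
    using assms(3) by auto
  have "prefers G b = prefers G' b" using b(1) by (simp add: prefers_def fun_eq_iff)
  then show ?thesis using Some assms(1,2) b by (auto simp: accepted_def)
qed

text \<open>Round t at r only looks at the pointers of the proposers competing at r's target, i.e.
  at distance 2; hence rejections after t rounds are determined by the radius-2t neighbourhood.\<close>

lemma target_accepted_local:
  assumes IH: "\<And>r. agree_on G G' (neighbourhood G r (2 * t)) \<Longrightarrow> rejections G t r = rejections G' t r"
    and ag: "agree_on G G' (neighbourhood G r (2 * t + 2))"
  shows "target G (rejections G t) r = target G' (rejections G' t) r"
    and "accepted G (rejections G t) r = accepted G' (rejections G' t) r"
proof -
  have agree_at: "red G x = red G' x \<and> pref G x = pref G' x"
    if "x \<in> neighbourhood G r (2 * t + 2)" for x
    using ag that unfolding agree_on_def by blast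
  have target_eq: "target G (rejections G t) x = target G' (rejections G' t) x"
    if x: "neighbourhood G x (2 * t) \<subseteq> neighbourhood G r (2 * t + 2)" for x
  proof -
    have "rejections G t x = rejections G' t x" using IH agree_on_subset[OF ag x] by blast
    moreover have "pref G x = pref G' x" using agree_at x self_in_neighbourhood by blast
    ultimately show ?thesis by (simp add: target_def)
  qed
  show tr: "target G (rejections G t) r = target G' (rejections G' t) r"
    by (rule target_eq, rule neighbourhood_mono) simp
  show "accepted G (rejections G t) r = accepted G' (rejections G' t) r"
  proof (rule accepted_cong[OF _ tr])
    show "red G r = red G' r" using agree_at self_in_neighbourhood by blast
    fix b assume "target G (rejections G t) r = Some b"
    then have "b \<in> set (pref G r)" by (rule target_SomeD[THEN conjunct1])
    then have b: "neighbourhood G b (2 * t + 1) \<subseteq> neighbourhood G r (2 * t + 2)"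
      using neighbourhood_pref_subset[of b G r "2 * t + 1"] by (simp del: neighbourhood.simps)
    have r': "neighbourhood G r' (2 * t) \<subseteq> neighbourhood G r (2 * t + 2)"
      if "r' \<in> set (pref G b)" for r'
      using neighbourhood_pref_subset[OF that, of "2 * t"] b by (simp del: neighbourhood.simps)
    have "pref G b = pref G' b" using agree_at b self_in_neighbourhood by blast
    moreover have "red G r' = red G' r' \<and> target G (rejections G t) r' = target G' (rejections G' t) r'"
      if "r' \<in> set (pref G b)" for r'
      using agree_at r'[OF that] self_in_neighbourhood target_eq[OF r'[OF that]] by blast
    ultimately show "pref G b = pref G' b \<and> (\<forall>r'\<in>set (pref G b).
        red G r' = red G' r' \<and> target G (rejections G t) r' = target G' (rejections G' t) r')"
      by blast
  qed
qed

lemma rejections_local: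
  "agree_on G G' (neighbourhood G r (2 * t)) \<Longrightarrow> rejections G t r = rejections G' t r"
proof (induction t arbitrary: r)
  case (Suc t)
  then have ag: "agree_on G G' (neighbourhood G r (2 * t + 2))" by simp
  have "agree_on G G' (neighbourhood G r (2 * t))"
    by (rule agree_on_subset[OF ag neighbourhood_mono]) simp
  then have "rejections G t r = rejections G' t r" by (rule Suc.IH)
  moreover have "red G r = red G' r" using ag self_in_neighbourhood by (auto simp: agree_on_def)
  ultimately show ?case using target_accepted_local[OF Suc.IH ag] by (simp only: rejections_Suc active_def)
qed simp

lemma accepted_local:
  "agree_on G G' (neighbourhood G r (2 * t + 2)) \<Longrightarrow>
     accepted G (rejections G t) r = accepted G' (rejections G' t) r"
  by (rule target_accepted_local(2)[OF rejections_local])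

section \<open>The sampling algorithm\<close>

type_synonym view = "nat \<Rightarrow> (bool \<times> nat list) option"

text \<open>explore d v V k queries the radius-d neighbourhood of v depth first, recording the
  answers in the view V, and continues with k; collect G d v V is the resulting view.\<close>

primrec explore :: "nat \<Rightarrow> nat \<Rightarrow> view \<Rightarrow> (view \<Rightarrow> alg) \<Rightarrow> alg" where
  "explore 0 = (\<lambda>v V k. Query v (\<lambda>a. k (V(v := Some a))))"
| "explore (Suc d) =
     (\<lambda>v V k. Query v (\<lambda>a. foldr (\<lambda>x c V'. explore d x V' c) (snd a) k (V(v := Some a))))"

primrec collect :: "bigraph \<Rightarrow> nat \<Rightarrow> nat \<Rightarrow> view \<Rightarrow> view" where
  "collect G 0 = (\<lambda>v V. V(v := Some (answer G v)))"
| "collect G (Suc d) =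
     (\<lambda>v V. fold (\<lambda>x V'. collect G d x V') (pref G v) (V(v := Some (answer G v))))"

lemma answer_simps [simp]: "snd (answer G v) = pref G v" "fst (answer G v) = red G v"
  by (simp_all add: answer_def)

lemma run_explore: "run n G (explore d v V k) = run n G (k (collect G d v V))"
proof (induction d arbitrary: v V k)
  case (Suc d)
  have "run n G (foldr (\<lambda>x c V'. explore d x V' c) xs k V) =
        run n G (k (fold (\<lambda>x V'. collect G d x V') xs V))" for xs V
    by (induction xs arbitrary: V) (simp_all add: Suc.IH)
  then show ?case by (simp add: fun_upd_def)
qed (simp add: fun_upd_def)

lemma legal_explore:
  "v \<in> K \<Longrightarrow> (\<And>K' V'. K \<subseteq> K' \<Longrightarrow> legal K' (k V')) \<Longrightarrow> legal K (explore d v V k)"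
proof (induction d arbitrary: v V k K)
  case (Suc d)
  have foldr: "set xs \<subseteq> K \<Longrightarrow> (\<And>K' V'. K \<subseteq> K' \<Longrightarrow> legal K' (k V')) \<Longrightarrow>
          legal K (foldr (\<lambda>x c V'. explore d x V' c) xs k V)" for xs K V
  proof (induction xs arbitrary: K V)
    case (Cons x xs)
    then show ?case by (auto intro!: Suc.IH Cons.IH)
  qed auto
  show ?case using Suc.prems by (auto intro!: foldr)
qed auto

lemma queries_le_mono: "queries_le n G a b \<Longrightarrow> b \<le> b' \<Longrightarrow> queries_le n G a b'"
proof (induction a arbitrary: b b')
  case (Flip f)
  then show ?case by simp (metis rangeI)
next
  case (Sample f)
  then show ?case by simp (metis rangeI)
next
  case (Query v f)
  then show ?case by simp (metis rangeI diff_right_mono)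
qed auto

primrec explore_cost :: "real \<Rightarrow> nat \<Rightarrow> real" where
  "explore_cost D 0 = 1"
| "explore_cost D (Suc d) = 1 + D * explore_cost D d"

lemma explore_cost_nonneg: "D \<ge> 0 \<Longrightarrow> explore_cost D d \<ge> 0"
  by (induction d) auto

lemma explore_cost_eq: "(D - 1) * explore_cost D d = D ^ Suc d - 1"
  by (induction d) (simp_all add: algebra_simps)

definition sound_view :: "bigraph \<Rightarrow> view \<Rightarrow> bool" where
  "sound_view G V \<longleftrightarrow> (\<forall>x a. V x = Some a \<longrightarrow> a = answer G x)"

lemma sound_view_collect: "sound_view G V \<Longrightarrow> sound_view G (collect G d v V)"
proof (induction d arbitrary: v V)
  case (Suc d)
  have "sound_view G (fold (\<lambda>x V'. collect G d x V') xs V)" if "sound_view G V" for xs V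
    using that by (induction xs arbitrary: V) (simp_all add: Suc.IH)
  moreover have "sound_view G (V(v := Some (answer G v)))"
    using Suc.prems by (auto simp: sound_view_def)
  ultimately show ?case by simp
qed (auto simp: sound_view_def)

lemma collect_keeps_known: "V x \<noteq> None \<Longrightarrow> collect G d v V x \<noteq> None"
proof (induction d arbitrary: v V)
  case (Suc d)
  have "fold (\<lambda>x V'. collect G d x V') xs V x \<noteq> None" if "V x \<noteq> None" for xs V
    using that
  proof (induction xs arbitrary: V)
    case (Cons z xs)
    then show ?case using Suc.IH[of V z] by simp
  qed simp
  then show ?case using Suc.prems by simp
qed simp

lemma collect_covers_neighbourhood: "x \<in> neighbourhood G v d \<Longrightarrow> collect G d v V x \<noteq> None"
proof (induction d arbitrary: v V)
  case (Suc d)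
  have fold: "fold (\<lambda>x V'. collect G d x V') xs V x \<noteq> None"
    if "V x \<noteq> None \<or> (\<exists>y\<in>set xs. x \<in> neighbourhood G y d)" for xs V
    using that
  proof (induction xs arbitrary: V)
    case (Cons z xs)
    have "collect G d z V x \<noteq> None \<or> (\<exists>y\<in>set xs. x \<in> neighbourhood G y d)"
      using Cons.prems Suc.IH collect_keeps_known by auto
    then show ?case using Cons.IH by simp
  qed simp
  have "(V(v := Some (answer G v))) x \<noteq> None \<or> (\<exists>y\<in>set (pref G v). x \<in> neighbourhood G y d)"
    using Suc.prems by auto
  then show ?case using fold by simp
qed simp

definition graph_of_view :: "view \<Rightarrow> bigraph" where
  "graph_of_view V = \<lparr>red = (\<lambda>x. case V x of Some a \<Rightarrow> fst a | None \<Rightarrow> False),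
                      pref = (\<lambda>x. case V x of Some a \<Rightarrow> snd a | None \<Rightarrow> [])\<rparr>"

lemma agree_on_graph_of_view:
  "sound_view G V \<Longrightarrow> (\<forall>x\<in>S. V x \<noteq> None) \<Longrightarrow> agree_on G (graph_of_view V) S"
  unfolding agree_on_def sound_view_def graph_of_view_def answer_def by (auto split: option.splits)

definition accepted_in_view :: "nat \<Rightarrow> nat \<Rightarrow> view \<Rightarrow> real" where
  "accepted_in_view k u V = of_bool (accepted (graph_of_view V) (rejections (graph_of_view V) k) u)"

lemma accepted_in_view_collect:
  "accepted_in_view k u (collect G (2 * k + 2) u Map.empty) = of_bool (accepted G (rejections G k) u)"
proof -
  have "sound_view G (collect G (2 * k + 2) u Map.empty)"
    by (rule sound_view_collect) (simp add: sound_view_def)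
  then have "agree_on G (graph_of_view (collect G (2 * k + 2) u Map.empty)) (neighbourhood G u (2 * k + 2))"
    using collect_covers_neighbourhood by (blast intro: agree_on_graph_of_view)
  then show ?thesis unfolding accepted_in_view_def by (simp add: accepted_local)
qed

primrec sample_loop :: "nat \<Rightarrow> nat \<Rightarrow> (real \<Rightarrow> real) \<Rightarrow> real \<Rightarrow> alg" where
  "sample_loop 0 k f a = Output (f a)"
| "sample_loop (Suc s) k f a =
     Sample (\<lambda>u. explore (2 * k + 2) u Map.empty (\<lambda>V. sample_loop s k f (a + accepted_in_view k u V)))"

definition estimator :: "nat \<Rightarrow> nat \<Rightarrow> nat \<Rightarrow> alg" where
  "estimator s k n = (if n = 0 then Output 0 else sample_loop s k (\<lambda>x. real n * x / real s) 0)"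

lemma legal_sample_loop: "legal K (sample_loop s k f a)"
proof (induction s arbitrary: K a)
  case (Suc s)
  show ?case unfolding sample_loop.simps legal.simps
    by (intro allI legal_explore insertI1 Suc.IH)
qed simp

lemma legal_estimator: "legal {} (estimator s k n)"
  by (simp add: estimator_def legal_sample_loop)

context deg_bigraph
begin

lemma queries_explore:
  assumes "v < n" "c \<ge> 0" "\<And>V'. queries_le n G (k V') c"
  shows "queries_le n G (explore d v V k) (c + explore_cost (real D) d)"
  using assms
proof (induction d arbitrary: v V k c)
  case (Suc d)
  have cost: "explore_cost (real D) d \<ge> 0" by (rule explore_cost_nonneg) simp
  have foldr: "set xs \<subseteq> {..<n} \<Longrightarrow> queries_le n G (foldr (\<lambda>x c V'. explore d x V' c) xs k V)
          (c + real (length xs) * explore_cost (real D) d)" for xs V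
  proof (induction xs arbitrary: V)
    case (Cons z xs)
    have "queries_le n G (explore d z V (foldr (\<lambda>x c V'. explore d x V' c) xs k))
          (c + real (length xs) * explore_cost (real D) d + explore_cost (real D) d)"
      using Cons Suc.prems cost by (intro Suc.IH) auto
    then show ?case by (simp add: algebra_simps)
  qed (use Suc.prems in simp)
  have "set (pref G v) \<subseteq> {..<n}" using pref_lt Suc.prems by auto
  moreover have "real (length (pref G v)) * explore_cost (real D) d \<le> real D * explore_cost (real D) d"
    using deg Suc.prems cost by (intro mult_right_mono) auto
  ultimately have "queries_le n G (foldr (\<lambda>x c V'. explore d x V' c) (pref G v) k (V(v := Some (answer G v))))
      (c + real D * explore_cost (real D) d)"
    by (intro queries_le_mono[OF foldr]) auto
  then show ?case using Suc.prems cost by simp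
qed simp

lemma queries_estimator: "queries_le n G (estimator s k n) (real s * explore_cost (real D) (2 * k + 2))"
proof -
  have cost: "explore_cost (real D) (2 * k + 2) \<ge> 0" by (rule explore_cost_nonneg) simp
  have "queries_le n G (sample_loop s k f a) (real s * explore_cost (real D) (2 * k + 2))" for f a
  proof (induction s arbitrary: a)
    case (Suc s)
    have "queries_le n G (explore (2 * k + 2) u Map.empty (\<lambda>V. sample_loop s k f (a + accepted_in_view k u V)))
          (real s * explore_cost (real D) (2 * k + 2) + explore_cost (real D) (2 * k + 2))" if "u < n" for u
      using that cost by (intro queries_explore Suc.IH) auto
    then show ?case by (simp add: algebra_simps)
  qed simp
  then show ?thesis by (simp add: estimator_def)
qed

definition accepted_fraction :: "nat \<Rightarrow> real" where
  "accepted_fraction k = real (card (Accepted k)) / real n"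

lemma accepted_fraction_range: "accepted_fraction k \<in> {0..1}"
proof -
  have "card (Accepted k) \<le> n" using card_mono[of "{..<n}" "Accepted k"] by (auto simp: Accepted_def)
  then show ?thesis unfolding accepted_fraction_def by (cases "n = 0") (auto simp: divide_le_eq_1)
qed

lemma map_pmf_accepted:
  assumes "n > 0"
  shows "map_pmf (accepted_at k) (pmf_of_set {0..<n}) = bernoulli_pmf (accepted_fraction k)"
proof (rule pmf_eqI)
  fix b :: bool
  have "card (Accepted k) + card {u \<in> {0..<n}. \<not> accepted_at k u}
        = card (Accepted k \<union> {u \<in> {0..<n}. \<not> accepted_at k u})"
    using finite_round_sets(2) by (intro card_Un_disjoint[symmetric]) (auto simp: Accepted_def)
  also have "Accepted k \<union> {u \<in> {0..<n}. \<not> accepted_at k u} = {0..<n}" by (auto simp: Accepted_def)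
  finally have split: "card (Accepted k) + card {u \<in> {0..<n}. \<not> accepted_at k u} = n" by simp
  have "pmf (map_pmf (accepted_at k) (pmf_of_set {0..<n})) b
        = real (card ({0..<n} \<inter> accepted_at k -` {b})) / real n"
    using assms by (simp add: pmf_map measure_pmf_of_set)
  also have "\<dots> = pmf (bernoulli_pmf (accepted_fraction k)) b"
  proof (cases b)
    case True
    have "{0..<n} \<inter> accepted_at k -` {b} = Accepted k" using True by (auto simp: Accepted_def)
    then show ?thesis using True accepted_fraction_range by (simp add: accepted_fraction_def)
  next
    case False
    have "{0..<n} \<inter> accepted_at k -` {b} = {u \<in> {0..<n}. \<not> accepted_at k u}" using False by auto
    moreover have "real (card {u \<in> {0..<n}. \<not> accepted_at k u}) / real n = 1 - accepted_fraction k"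
      using split assms unfolding accepted_fraction_def by (simp add: field_simps flip: of_nat_add)
    ultimately show ?thesis using False accepted_fraction_range by simp
  qed
  finally show "pmf (map_pmf (accepted_at k) (pmf_of_set {0..<n})) b = pmf (bernoulli_pmf (accepted_fraction k)) b" .
qed

lemma run_sample_loop:
  assumes "n > 0"
  shows "run n G (sample_loop s k f a) = map_pmf (\<lambda>j. f (a + real j)) (binomial_pmf s (accepted_fraction k))"
proof (induction s arbitrary: a)
  case 0
  then show ?case using accepted_fraction_range by (simp add: binomial_pmf_0)
next
  case (Suc s)
  have of_bool_nat: "real (if b then 1 else 0 :: nat) = of_bool b" for b by simp
  define g where "g b = map_pmf (\<lambda>j. f (a + of_bool b + real j)) (binomial_pmf s (accepted_fraction k))" for b
  have "run n G (sample_loop (Suc s) k f a) = bind_pmf (pmf_of_set {0..<n})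
          (\<lambda>u. run n G (sample_loop s k f (a + accepted_in_view k u (collect G (2 * k + 2) u Map.empty))))"
    by (simp only: sample_loop.simps run.simps run_explore)
  also have "\<dots> = bind_pmf (pmf_of_set {0..<n}) (\<lambda>u. g (accepted_at k u))"
    by (simp only: accepted_in_view_collect Suc.IH g_def add.assoc)
  also have "\<dots> = bind_pmf (map_pmf (accepted_at k) (pmf_of_set {0..<n})) g"
    by (simp add: bind_map_pmf)
  also have "\<dots> = map_pmf (\<lambda>j. f (a + real j)) (binomial_pmf (Suc s) (accepted_fraction k))"
    unfolding map_pmf_accepted[OF assms] binomial_pmf_Suc[OF accepted_fraction_range] g_def
    by (simp add: map_bind_pmf map_pmf_def bind_assoc_pmf bind_return_pmf add.assoc of_bool_nat)
  finally show ?case .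
qed

lemma run_estimator:
  "n > 0 \<Longrightarrow> run n G (estimator s k n) =
     map_pmf (\<lambda>j. real n * real j / real s) (binomial_pmf s (accepted_fraction k))"
  by (simp add: estimator_def run_sample_loop)

end

section \<open>Accuracy\<close>

context deg_bigraph
begin

lemma card_Accepted_close:
  assumes "0 < k" "real (D - 1) \<le> c * real k" "k \<le> T" "D * n + 1 \<le> T"
  shows "real (card (Accepted T)) - real (card (Accepted k)) \<le> c * real (card (Accepted T))"
proof -
  have "real k * (real (card (Accepted T)) - real (card (Accepted k))) \<le> real k * real (card (Active k))"
    using card_Accepted_final_le[OF assms(3,4)] by (intro mult_left_mono) auto
  also have "\<dots> \<le> real (D - 1) * real (card (Accepted k))"
    using card_Active_le[of k] by (simp flip: of_nat_mult)
  also have "\<dots> \<le> real (D - 1) * real (card (Accepted T))"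
    using card_Accepted_mono[OF assms(3)] by (intro mult_left_mono) auto
  also have "\<dots> \<le> real k * (c * real (card (Accepted T)))"
    using assms(2) by (simp add: mult_right_mono mult.assoc[symmetric] mult.commute[of "real k"])
  finally show ?thesis using assms(1) by simp
qed

text \<open>The stable matching witnessing accuracy is the one Gale--Shapley reaches after
  D n + 1 + k rounds; the estimation error is split as \<epsilon>/5 (sampling) plus 4\<epsilon>/5 (truncation).\<close>

lemma estimate_accurate:
  assumes "no_isolated n G" "0 < \<epsilon>" "0 < k" "real (D - 1) \<le> 4 * \<epsilon> / 5 * real k"
    and x: "\<bar>x - real (card (Accepted k))\<bar> \<le> \<epsilon> / (10 * (real D + 1)) * real n"
  shows "\<exists>M. stable_matching n G M \<and> \<bar>x - real (card M)\<bar> \<le> \<epsilon> * real (card M)"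
proof -
  define T where "T = D * n + 1 + k"
  define S where "S = real (card (gs_matching T))"
  have T: "D * n + 1 \<le> T" "k \<le> T" by (simp_all add: T_def)
  have stable: "stable_matching n G (gs_matching T)" by (rule stable_gs_matching[OF T(1)])
  have S: "S = real (card (Accepted T))" by (simp add: S_def card_gs_matching)
  have "real n \<le> real (2 * (D + 1) * card (gs_matching T))"
    using card_stable_matching_ge[OF stable assms(1)] by (simp only: of_nat_le_iff)
  then have "real n \<le> 2 * (real D + 1) * S" by (simp add: S_def algebra_simps)
  then have "\<epsilon> / (10 * (real D + 1)) * real n \<le> \<epsilon> / (10 * (real D + 1)) * (2 * (real D + 1) * S)"
    using assms(2) by (intro mult_left_mono) auto
  also have "\<dots> = \<epsilon> / 5 * S" by (simp add: field_simps)
  finally have "\<epsilon> / (10 * (real D + 1)) * real n \<le> \<epsilon> / 5 * S" .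
  moreover have "S - real (card (Accepted k)) \<le> 4 * \<epsilon> / 5 * S"
    unfolding S using card_Accepted_close[OF assms(3,4) T(2,1)] .
  moreover have "real (card (Accepted k)) \<le> S" unfolding S using card_Accepted_mono[OF T(2)] by simp
  ultimately have "\<bar>x - S\<bar> \<le> \<epsilon> * S" using x assms(2) unfolding abs_le_iff by linarith
  then show ?thesis using stable unfolding S_def by blast
qed

end

lemma binomial_deviation_prob_le:
  assumes "0 < \<delta>" "\<delta> \<le> 1/2" "0 < t" "p \<in> {0..1}" "ln (1 / \<delta>) \<le> real s * t\<^sup>2"
  shows "measure_pmf.prob (binomial_pmf s p) {j. t \<le> \<bar>real j / real s - p\<bar>} \<le> \<delta>"
proof -
  have "0 < ln (1 / \<delta>)" using assms(1,2) by simp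
  then have "0 < s" using assms(5) by (cases s) auto
  then have "measure_pmf.prob (binomial_pmf s p) {j. t \<le> \<bar>real j / real s - p\<bar>}
             \<le> 2 * exp (- 2 * real s * t\<^sup>2)"
    using binomial_distribution.prob_abs_ge'[of p s t] assms(3,4)
    by (simp add: binomial_distribution_def)
  also have "\<dots> \<le> 2 * exp (- 2 * ln (1 / \<delta>))" using assms(5) by simp
  also have "\<dots> = 2 * exp (ln (\<delta>\<^sup>2))" using assms(1) by (simp add: ln_div ln_realpow)
  also have "\<dots> = 2 * \<delta>\<^sup>2" using assms(1) by simp
  also have "\<dots> \<le> \<delta>" using assms(1,2) by (simp add: power2_eq_square)
  finally show ?thesis .
qed

context deg_bigraph
begin

lemma prob_estimator_accurate:
  assumes "no_isolated n G" "0 < \<delta>" "\<delta> \<le> 1/2" "0 < \<epsilon>" "0 < k"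
    and "real (D - 1) \<le> 4 * \<epsilon> / 5 * real k"
    and s: "100 * (real D + 1)\<^sup>2 * ln (1 / \<delta>) / \<epsilon>\<^sup>2 \<le> real s"
  shows "1 - \<delta> \<le> measure_pmf.prob (run n G (estimator s k n))
           {m. \<exists>M. stable_matching n G M \<and> \<bar>m - real (card M)\<bar> \<le> \<epsilon> * real (card M)}"
    (is "_ \<le> measure_pmf.prob _ ?E")
proof (cases "n = 0")
  case True
  then have "stable_matching n G {}"
    by (simp add: stable_matching_def matching_def unstable_edge_def edge_def)
  then have "0 \<in> ?E" by force
  then show ?thesis using True assms(2) by (simp add: estimator_def)
next
  case False
  define t where "t = \<epsilon> / (10 * (real D + 1))"
  define p where "p = accepted_fraction k"
  have t: "0 < t" "ln (1 / \<delta>) \<le> real s * t\<^sup>2"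
  proof -
    show "0 < t" using assms(4) by (simp add: t_def)
    have "t\<^sup>2 = \<epsilon>\<^sup>2 / (100 * (real D + 1)\<^sup>2)"
      unfolding t_def by (simp add: power_divide power2_eq_square algebra_simps)
    moreover have "(real D + 1)\<^sup>2 > 0" "\<epsilon>\<^sup>2 > 0" using assms(4) by simp_all
    ultimately have "ln (1 / \<delta>) = 100 * (real D + 1)\<^sup>2 * ln (1 / \<delta>) / \<epsilon>\<^sup>2 * t\<^sup>2" by simp
    also have "\<dots> \<le> real s * t\<^sup>2" using s by (intro mult_right_mono) auto
    finally show "ln (1 / \<delta>) \<le> real s * t\<^sup>2" .
  qed
  have close: "real n * real j / real s \<in> ?E" if "\<bar>real j / real s - p\<bar> < t" for j
  proof -
    have "real n * real j / real s - real (card (Accepted k)) = real n * (real j / real s - p)"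
      using False by (simp add: p_def accepted_fraction_def field_simps)
    moreover have "\<bar>real n * (real j / real s - p)\<bar> \<le> real n * t"
      using mult_left_mono[OF less_imp_le[OF that], of "real n"] by (simp add: abs_mult)
    ultimately have "\<bar>real n * real j / real s - real (card (Accepted k))\<bar> \<le> \<epsilon> / (10 * (real D + 1)) * real n"
      by (simp add: t_def mult.commute)
    then show ?thesis unfolding mem_Collect_eq by (rule estimate_accurate[OF assms(1,4,5,6)])
  qed
  have compl: "space (binomial_pmf s p) - {j. t \<le> \<bar>real j / real s - p\<bar>}
               = {j. \<bar>real j / real s - p\<bar> < t}" by auto
  have "1 - \<delta> \<le> 1 - measure_pmf.prob (binomial_pmf s p) {j. t \<le> \<bar>real j / real s - p\<bar>}"
    using binomial_deviation_prob_le[OF assms(2,3) t(1) _ t(2)] accepted_fraction_range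
    by (simp add: p_def)
  also have "\<dots> = measure_pmf.prob (binomial_pmf s p) {j. \<bar>real j / real s - p\<bar> < t}"
    unfolding compl[symmetric] by (rule measure_pmf.prob_compl[symmetric]) simp
  also have "\<dots> \<le> measure_pmf.prob (binomial_pmf s p) ((\<lambda>j. real n * real j / real s) -` ?E)"
    using close by (intro measure_pmf.finite_measure_mono) (simp_all add: subset_eq)
  also have "\<dots> = measure_pmf.prob (run n G (estimator s k n)) ?E"
    using False by (simp add: run_estimator p_def)
  finally show ?thesis .
qed

end

section \<open>The query budget\<close>

lemma explore_cost_le: "3 \<le> D \<Longrightarrow> explore_cost D d \<le> D ^ Suc d / 2"
  using explore_cost_eq[of D d] explore_cost_nonneg[of D d]
    mult_right_mono[of 2 "D - 1" "explore_cost D d"] by simp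

lemma pow5_succ_le_pow8: fixes m :: real assumes "2 \<le> m" shows "(m + 1) ^ 5 \<le> m ^ 8"
proof -
  have "(m + 1) ^ 5 \<le> (3/2 * m) ^ 5" using assms by (intro power_mono) auto
  also have "\<dots> = 243/32 * m ^ 5" by (simp add: power_mult_distrib power_divide)
  also have "\<dots> \<le> 2 ^ 3 * m ^ 5" using assms by simp
  also have "\<dots> \<le> m ^ 3 * m ^ 5" using assms by (intro mult_right_mono power_mono) auto
  finally show ?thesis by (simp flip: power_add)
qed

lemma budget_polynomial_le:
  fixes m :: real assumes "2 \<le> m" shows "101 * (m + 2) ^ 2 * (m + 1) ^ 5 \<le> 50000 * m ^ 7"
proof -
  have "101 * (m + 2) ^ 2 * (m + 1) ^ 5 \<le> 101 * (2 * m) ^ 2 * (3/2 * m) ^ 5"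
    using assms by (intro mult_mono power_mono) auto
  also have "\<dots> = 101 * 4 * (243/32) * m ^ 7" by (simp add: power_mult_distrib power_divide flip: power_add)
  also have "\<dots> \<le> 50000 * m ^ 7" using assms by simp
  finally show ?thesis .
qed

lemma powr_le_pred_powr:
  fixes D x :: real assumes "3 \<le> D" "0 \<le> x" shows "D powr x \<le> (D - 1) powr (8 / 5 * x)"
proof -
  have "D powr 5 \<le> (D - 1) powr 8" using pow5_succ_le_pow8[of "D - 1"] assms by simp
  then have "(D powr 5) powr (x / 5) \<le> ((D - 1) powr 8) powr (x / 5)"
    using assms by (intro powr_mono2) auto
  then show ?thesis by (simp add: powr_powr)
qed

lemma query_budget_le:
  fixes \<delta> \<epsilon> :: real and D k s :: nat
  assumes \<delta>: "0 < \<delta>" "\<delta> \<le> 1/2" and \<epsilon>: "0 < \<epsilon>" "\<epsilon> \<le> 1" and D: "3 \<le> D"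
    and k: "real k \<le> 5 * (real D - 1) / (4 * \<epsilon>) + 1"
    and s: "real s \<le> 100 * (real D + 1)\<^sup>2 * ln (1 / \<delta>) / \<epsilon>\<^sup>2 + 1"
  shows "real s * explore_cost (real D) (2 * k + 2) \<le>
         25000 * \<epsilon> powr (-2) * (real D - 1) powr (3 + 4 * real D / \<epsilon>) * ln (1 / \<delta>)"
proof -
  define L where "L = ln (1 / \<delta>) / \<epsilon>\<^sup>2"
  define m where "m = real D - 1"
  have m2: "2 \<le> m" using D by (simp add: m_def)
  have L: "1/2 \<le> L"
  proof -
    have "1/2 \<le> ln (2 :: real)" using ln_diff_le[of 1 2] by simp
    also have "\<dots> \<le> ln (1 / \<delta>)" using \<delta> by (subst ln_le_cancel_iff) (auto simp: field_simps)
    also have "\<dots> \<le> L" unfolding L_def using \<epsilon> calculation by (simp add: le_divide_eq power_le_one)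
    finally show ?thesis .
  qed
  have sL: "real s \<le> 101 * (real D + 1)\<^sup>2 * L"
  proof -
    have "2 * (1/2) \<le> (real D + 1)\<^sup>2 * L"
      using L D power_mono[of 4 "real D + 1" 2] by (intro mult_mono) auto
    then show ?thesis using s unfolding L_def by simp
  qed
  have "real D ^ (2 * k + 3) = real D powr real (2 * k + 3)" by (rule powr_realpow[symmetric]) (use D in simp)
  also have "\<dots> \<le> real D powr (5 * m / (2 * \<epsilon>) + 5)"
    using k \<epsilon> D unfolding m_def by (intro powr_mono) (simp_all add: field_simps)
  also have "\<dots> = real D powr (5 * m / (2 * \<epsilon>)) * real D ^ 5" using D by (simp add: powr_add powr_realpow)
  also have "\<dots> \<le> m powr (4 * m / \<epsilon>) * real D ^ 5"
  proof -
    have "8 / 5 * (5 * m / (2 * \<epsilon>)) = 4 * m / \<epsilon>" using \<epsilon> by (simp add: field_simps)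
    then show ?thesis
      using powr_le_pred_powr[of "real D" "5 * m / (2 * \<epsilon>)"] D \<epsilon> m2
      unfolding m_def[symmetric] by (intro mult_right_mono) auto
  qed
  finally have power: "real D ^ (2 * k + 3) \<le> real D ^ 5 * m powr (4 * m / \<epsilon>)"
    by (simp add: mult.commute)
  have D3: "3 \<le> real D" and Suc: "Suc (2 * k + 2) = 2 * k + 3" using D by simp_all
  have cost: "explore_cost (real D) (2 * k + 2) \<le> real D ^ 5 * m powr (4 * m / \<epsilon>) / 2"
    using explore_cost_le[OF D3, of "2 * k + 2"] power unfolding Suc by linarith
  have "m ^ 7 * m powr (4 * m / \<epsilon>) = m powr 3 * m powr 4 * m powr (4 * m / \<epsilon>)"
    using m2 by (simp add: powr_realpow flip: power_add)
  also have "\<dots> \<le> m powr 3 * m powr (4 / \<epsilon>) * m powr (4 * m / \<epsilon>)"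
    using m2 \<epsilon> by (intro mult_right_mono mult_left_mono powr_mono) (auto simp: field_simps)
  also have "\<dots> = m powr (3 + 4 * real D / \<epsilon>)"
  proof -
    have "3 + 4 / \<epsilon> + 4 * m / \<epsilon> = 3 + 4 * real D / \<epsilon>" using \<epsilon> by (simp add: m_def field_simps)
    then show ?thesis by (simp only: powr_add[symmetric])
  qed
  finally have exponent: "m ^ 7 * m powr (4 * m / \<epsilon>) \<le> m powr (3 + 4 * real D / \<epsilon>)" .
  have "real s * explore_cost (real D) (2 * k + 2)
        \<le> 101 * (real D + 1)\<^sup>2 * L * (real D ^ 5 * m powr (4 * m / \<epsilon>) / 2)"
    using sL cost explore_cost_nonneg[of "real D"] L by (intro mult_mono) auto
  also have "\<dots> = (101 * (m + 2)\<^sup>2 * (m + 1) ^ 5) * m powr (4 * m / \<epsilon>) * L / 2"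
    unfolding m_def by (simp add: algebra_simps)
  also have "\<dots> \<le> (50000 * m ^ 7) * m powr (4 * m / \<epsilon>) * L / 2"
    using budget_polynomial_le[OF m2] L by (intro divide_right_mono mult_right_mono) auto
  also have "\<dots> \<le> 25000 * L * m powr (3 + 4 * real D / \<epsilon>)"
    using exponent L by (simp add: mult_left_mono)
  also have "\<dots> = 25000 * \<epsilon> powr (-2) * (real D - 1) powr (3 + 4 * real D / \<epsilon>) * ln (1 / \<delta>)"
    unfolding L_def m_def using \<epsilon> by (simp add: powr_minus powr_realpow field_simps)
  finally show ?thesis .
qed

theorem theorem3:
  fixes \<delta> \<epsilon> :: real and \<Delta> :: nat
  assumes "0 < \<delta>" "\<delta> \<le> 1/2" "0 < \<epsilon>" "\<epsilon> \<le> 1" "\<Delta> \<ge> 3"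
  shows "\<exists>A :: nat \<Rightarrow> alg. \<forall>n G.
           valid_bigraph n G \<and> no_isolated n G \<and> max_degree_le n G \<Delta> \<longrightarrow>
             legal {} (A n) \<and>
             queries_le n G (A n)
               (25000 * \<epsilon> powr (-2) * (real \<Delta> - 1) powr (3 + 4 * real \<Delta> / \<epsilon>) * ln (1 / \<delta>)) \<and>
             measure_pmf.prob (run n G (A n))
               {m. \<exists>M. stable_matching n G M \<and> \<bar>m - real (card M)\<bar> \<le> \<epsilon> * real (card M)}
               \<ge> 1 - \<delta>"
proof -
  define k where "k = nat \<lceil>5 * (real \<Delta> - 1) / (4 * \<epsilon>)\<rceil>"
  define s where "s = nat \<lceil>100 * (real \<Delta> + 1)\<^sup>2 * ln (1 / \<delta>) / \<epsilon>\<^sup>2\<rceil>"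
  have pos: "0 < 5 * (real \<Delta> - 1) / (4 * \<epsilon>)" using assms by simp
  have k: "5 * (real \<Delta> - 1) / (4 * \<epsilon>) \<le> real k" unfolding k_def by linarith
  have "real k \<le> 5 * (real \<Delta> - 1) / (4 * \<epsilon>) + 1" unfolding k_def using pos by linarith
  moreover have "0 < real k" using k pos by linarith
  moreover have "real (\<Delta> - 1) \<le> 4 * \<epsilon> / 5 * real k" using k assms by (simp add: of_nat_diff field_simps)
  ultimately have rounds: "0 < k" "real (\<Delta> - 1) \<le> 4 * \<epsilon> / 5 * real k"
      "real k \<le> 5 * (real \<Delta> - 1) / (4 * \<epsilon>) + 1"
    by simp_all
  have "0 < ln (1 / \<delta>)" using assms by simp
  then have "0 \<le> 100 * (real \<Delta> + 1)\<^sup>2 * ln (1 / \<delta>) / \<epsilon>\<^sup>2" by simp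
  then have samples: "100 * (real \<Delta> + 1)\<^sup>2 * ln (1 / \<delta>) / \<epsilon>\<^sup>2 \<le> real s"
      "real s \<le> 100 * (real \<Delta> + 1)\<^sup>2 * ln (1 / \<delta>) / \<epsilon>\<^sup>2 + 1"
    unfolding s_def by linarith+
  show ?thesis
  proof (intro exI[of _ "estimator s k"] allI impI conjI)
    fix n G assume G: "valid_bigraph n G \<and> no_isolated n G \<and> max_degree_le n G \<Delta>"
    then interpret deg_bigraph n G \<Delta> by unfold_locales (auto simp: max_degree_le_def)
    show "legal {} (estimator s k n)" by (rule legal_estimator)
    show "queries_le n G (estimator s k n)
        (25000 * \<epsilon> powr (-2) * (real \<Delta> - 1) powr (3 + 4 * real \<Delta> / \<epsilon>) * ln (1 / \<delta>))"
      using queries_estimator query_budget_le[OF assms rounds(3) samples(2)] by (rule queries_le_mono)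
    show "1 - \<delta> \<le> measure_pmf.prob (run n G (estimator s k n))
        {m. \<exists>M. stable_matching n G M \<and> \<bar>m - real (card M)\<bar> \<le> \<epsilon> * real (card M)}"
      using prob_estimator_accurate G assms rounds(1,2) samples(1) by blast
  qed
qed

end
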